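(* Any nested logit that satisfies Regularity and Richness is a random utility nested logit, i.e., it admits a nested logit representation in which $\eta_i\le 1$ for every $i\le K$.
   Context: Here the set of alternatives $X$ may be infinite, and $\mathscr{A}$ is the collection of nonempty finite subsets of $X$. A stochastic choice function is $p:X\times\mathscr{A}\to[0,1]$ with $\sum_{a\in A}p(a,A)=1$, $p(x,A)=0$ for $x\notin A$, $p(a,A)>0$ for $a\in A$; $A\cup y=A\cup\{y\}$. $a\sim_p b$ means $\frac{p(a,A)}{p(b,A)}=\frac{p(a,\{a,b\})}{p(b,\{a,b\})}$ for all $A\in\mathscr{A}$ containing $a,b$. Nested logit: there exist a finite partition $X_1,\dots,X_K$ of $X$, $u:X\to\mathbb{R}_{++}$ and $\eta_1,\dots,\eta_K>0$ such that for every $A\in\mathscr{A}$ and $a\in A\cap X_i$, $p(a,A)=\frac{\big(\sum_{x\in A\cap X_i}u(x)\big)^{\eta_i}}{\sum_{j:A\cap X_j\ne\emptyset}\big(\sum_{y\in A\cap X_j}u(y)\big)^{\eta_j}}\cdot\frac{u(a)}{\sum_{b\in A\cap X_i}u(b)}$. Regularity: $p(x,A\cup y)\le p(x,A)$ for all $A\in\mathscr{A}$, $x\in A$, $y\in X$. Richness: for any $a\in X$ and $\rho\in(0,1)$ there is $b\in X$ with $a\sim_p b$ and $p(a,\{a,b\})=\rho$. *)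

theory Defs
  imports Complex_Main "HOL-Library.Disjoint_Sets"
begin

text \<open>The set of alternatives X is the (possibly infinite) universe of the type 'a.
  Menus are the nonempty finite subsets of X.\<close>

definition menu :: "'a set \<Rightarrow> bool" where
  "menu A \<longleftrightarrow> finite A \<and> A \<noteq> {}"

definition stoch_choice :: "('a \<Rightarrow> 'a set \<Rightarrow> real) \<Rightarrow> bool" where
  "stoch_choice p \<longleftrightarrow>
     (\<forall>A. menu A \<longrightarrow>
        (\<forall>x. 0 \<le> p x A \<and> p x A \<le> 1) \<and>
        (\<Sum>a\<in>A. p a A) = 1 \<and>
        (\<forall>x. x \<notin> A \<longrightarrow> p x A = 0) \<and>
        (\<forall>a\<in>A. p a A > 0))"

definition sim_p :: "('a \<Rightarrow> 'a set \<Rightarrow> real) \<Rightarrow> 'a \<Rightarrow> 'a \<Rightarrow> bool" where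
  "sim_p p a b \<longleftrightarrow>
     (\<forall>A. menu A \<and> a \<in> A \<and> b \<in> A \<longrightarrow>
        p a A / p b A = p a {a, b} / p b {a, b})"

definition nl_rep ::
  "('a \<Rightarrow> 'a set \<Rightarrow> real) \<Rightarrow> 'a set set \<Rightarrow> ('a \<Rightarrow> real) \<Rightarrow> ('a set \<Rightarrow> real) \<Rightarrow> bool" where
  "nl_rep p P u \<eta> \<longleftrightarrow>
     finite P \<and> partition_on UNIV P \<and>
     (\<forall>x. u x > 0) \<and> (\<forall>D\<in>P. \<eta> D > 0) \<and>
     (\<forall>A C a. menu A \<and> C \<in> P \<and> a \<in> A \<inter> C \<longrightarrow>
        p a A = ((\<Sum>x\<in>A \<inter> C. u x) powr \<eta> C /
                 (\<Sum>D\<in>{D\<in>P. A \<inter> D \<noteq> {}}. (\<Sum>y\<in>A \<inter> D. u y) powr \<eta> D))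
                * (u a / (\<Sum>b\<in>A \<inter> C. u b)))"

definition nested_logit :: "('a \<Rightarrow> 'a set \<Rightarrow> real) \<Rightarrow> bool" where
  "nested_logit p \<longleftrightarrow> (\<exists>P u \<eta>. nl_rep p P u \<eta>)"

definition regularity :: "('a \<Rightarrow> 'a set \<Rightarrow> real) \<Rightarrow> bool" where
  "regularity p \<longleftrightarrow> (\<forall>A x y. menu A \<and> x \<in> A \<longrightarrow> p x (insert y A) \<le> p x A)"

definition richness :: "('a \<Rightarrow> 'a set \<Rightarrow> real) \<Rightarrow> bool" where
  "richness p \<longleftrightarrow> (\<forall>a \<rho>. 0 < \<rho> \<and> \<rho> < 1 \<longrightarrow> (\<exists>b. sim_p p a b \<and> p a {a, b} = \<rho>))"

end

theory Submission
  imports Defs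
begin

text \<open>Suppose a nest C with \<open>\<eta> C > 1\<close> contains two alternatives x and y, and some other nest
  D exists. For z in D, the partner z' that Richness provides with \<open>z \<sim>\<^sub>p z'\<close> cannot lie in C,
  since adding a second member of C to \<open>{z, z'}\<close> changes the odds of z against z' whenever
  \<open>\<eta> C \<noteq> 1\<close>; making \<open>p(z, {z, z'})\<close> small therefore produces outside alternatives of
  arbitrarily large nest weight \<open>u(z') ^ \<eta>\<close>. Regularity, applied to adding y to \<open>{x, z'}\<close>,
  bounds exactly this weight when \<open>\<eta> C > 1\<close>.\<close>

lemma partition_on_UNIV_block_unique:
  "partition_on UNIV P \<Longrightarrow> D \<in> P \<Longrightarrow> D' \<in> P \<Longrightarrow> x \<in> D \<Longrightarrow> x \<in> D' \<Longrightarrow> D = D'"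
  using disjointD partition_on_def by fastforce

lemma partition_on_UNIV_block_exists: "partition_on UNIV P \<Longrightarrow> \<exists>D\<in>P. x \<in> D"
  by (metis UnionE iso_tuple_UNIV_I partition_onD1)

lemma nests_meeting_eq:
  assumes "partition_on UNIV P" "A \<subseteq> \<Union>Q" "Q \<subseteq> P" "\<forall>D\<in>Q. A \<inter> D \<noteq> {}"
  shows "{D\<in>P. A \<inter> D \<noteq> {}} = Q"
  using assms partition_on_UNIV_block_unique[OF assms(1)] by blast

lemma nl_repD:
  assumes "nl_rep p P u \<eta>" "menu A" "C \<in> P" "a \<in> A \<inter> C"
  shows "p a A = ((\<Sum>x\<in>A \<inter> C. u x) powr \<eta> C /
                 (\<Sum>D\<in>{D\<in>P. A \<inter> D \<noteq> {}}. (\<Sum>y\<in>A \<inter> D. u y) powr \<eta> D))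
                * (u a / (\<Sum>b\<in>A \<inter> C. u b))"
  using assms unfolding nl_rep_def by blast

lemma nl_rep_one_nest:
  assumes nl: "nl_rep p P u \<eta>" and A: "menu A" "A \<subseteq> C" "a \<in> A" and C: "C \<in> P"
  shows "p a A = u a / (\<Sum>x\<in>A. u x)"
proof -
  have part: "partition_on UNIV P" and u: "\<And>x. u x > 0" using nl unfolding nl_rep_def by auto
  have nests: "{D\<in>P. A \<inter> D \<noteq> {}} = {C}"
    using A C by (intro nests_meeting_eq[OF part]) (auto simp: menu_def)
  have "(\<Sum>x\<in>A. u x) > 0" using A u unfolding menu_def by (intro sum_pos) auto
  moreover have "A \<inter> C = A" using A by blast
  ultimately show ?thesis using nl_repD[OF nl A(1) C, of a] A nests by simp
qed

lemma nl_rep_two_nests: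
  assumes nl: "nl_rep p P u \<eta>" and A: "menu A" "A \<subseteq> C \<union> E" "A \<inter> E \<noteq> {}" "a \<in> A \<inter> C"
    and CE: "C \<in> P" "E \<in> P" "C \<noteq> E"
  shows "p a A = (\<Sum>x\<in>A \<inter> C. u x) powr \<eta> C /
                   ((\<Sum>x\<in>A \<inter> C. u x) powr \<eta> C + (\<Sum>x\<in>A \<inter> E. u x) powr \<eta> E)
                 * (u a / (\<Sum>x\<in>A \<inter> C. u x))"
proof -
  have part: "partition_on UNIV P" using nl unfolding nl_rep_def by auto
  have "{D\<in>P. A \<inter> D \<noteq> {}} = {C, E}"
    using A CE by (intro nests_meeting_eq[OF part]) auto
  then show ?thesis using nl_repD[OF nl A(1) CE(1) A(4)] CE(3) by simp
qed

lemma nl_rep_pair_same_nest: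
  assumes nl: "nl_rep p P u \<eta>" and C: "C \<in> P" "a \<in> C" "b \<in> C" "a \<noteq> b"
  shows "p a {a, b} = u a / (u a + u b)"
  using nl_rep_one_nest[OF nl _ _ _ C(1), of "{a, b}" a] C by (simp add: menu_def)

lemma nl_rep_pair_distinct_nests:
  assumes nl: "nl_rep p P u \<eta>" and CE: "C \<in> P" "E \<in> P" "C \<noteq> E" "a \<in> C" "b \<in> E"
  shows "p a {a, b} = u a powr \<eta> C / (u a powr \<eta> C + u b powr \<eta> E)"
proof -
  have part: "partition_on UNIV P" and u: "\<And>x. u x > 0" using nl unfolding nl_rep_def by auto
  have inter: "{a, b} \<inter> C = {a}" "{a, b} \<inter> E = {b}"
    using partition_on_UNIV_block_unique[OF part] CE by blast+
  have "p a {a, b} = (\<Sum>x\<in>{a, b} \<inter> C. u x) powr \<eta> C /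
      ((\<Sum>x\<in>{a, b} \<inter> C. u x) powr \<eta> C + (\<Sum>x\<in>{a, b} \<inter> E. u x) powr \<eta> E)
      * (u a / (\<Sum>x\<in>{a, b} \<inter> C. u x))"
    by (rule nl_rep_two_nests[OF nl _ _ _ _ CE(1-3)]) (use CE in \<open>auto simp: menu_def\<close>)
  then show ?thesis using u[of a] unfolding inter by simp
qed

lemma nl_rep_triple:
  assumes nl: "nl_rep p P u \<eta>" and CE: "C \<in> P" "E \<in> P" "C \<noteq> E" "a \<in> C" "b \<in> C" "a \<noteq> b" "c \<in> E"
  shows "p a {a, b, c} = (u a + u b) powr \<eta> C / ((u a + u b) powr \<eta> C + u c powr \<eta> E) * (u a / (u a + u b))"
    and "p c {a, b, c} = u c powr \<eta> E / (u c powr \<eta> E + (u a + u b) powr \<eta> C)"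
proof -
  have part: "partition_on UNIV P" and u: "\<And>x. u x > 0" using nl unfolding nl_rep_def by auto
  have inter: "{a, b, c} \<inter> C = {a, b}" "{a, b, c} \<inter> E = {c}"
    using partition_on_UNIV_block_unique[OF part] CE by blast+
  have menu: "menu {a, b, c}" by (simp add: menu_def)
  have cover: "{a, b, c} \<subseteq> C \<union> E" using CE by blast
  have "p a {a, b, c} = (\<Sum>x\<in>{a, b, c} \<inter> C. u x) powr \<eta> C /
      ((\<Sum>x\<in>{a, b, c} \<inter> C. u x) powr \<eta> C + (\<Sum>x\<in>{a, b, c} \<inter> E. u x) powr \<eta> E)
      * (u a / (\<Sum>x\<in>{a, b, c} \<inter> C. u x))"
    by (rule nl_rep_two_nests[OF nl menu cover _ _ CE(1-3)]) (use CE in blast)+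
  then show "p a {a, b, c} = (u a + u b) powr \<eta> C / ((u a + u b) powr \<eta> C + u c powr \<eta> E) * (u a / (u a + u b))"
    unfolding inter using CE(6) by simp
  have "p c {a, b, c} = (\<Sum>x\<in>{a, b, c} \<inter> E. u x) powr \<eta> E /
      ((\<Sum>x\<in>{a, b, c} \<inter> E. u x) powr \<eta> E + (\<Sum>x\<in>{a, b, c} \<inter> C. u x) powr \<eta> C)
      * (u c / (\<Sum>x\<in>{a, b, c} \<inter> E. u x))"
    by (rule nl_rep_two_nests[OF nl menu _ _ _ CE(2,1) CE(3)[symmetric]]) (use CE in blast)+
  then show "p c {a, b, c} = u c powr \<eta> E / (u c powr \<eta> E + (u a + u b) powr \<eta> C)"
    unfolding inter using CE(6) u[of c] by simp
qed

lemma sim_p_partner_outside_nest: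
  assumes nl: "nl_rep p P u \<eta>" and CD: "C \<in> P" "D \<in> P" "D \<noteq> C" "z \<in> D" "z' \<in> C" "m \<in> C" "m \<noteq> z'"
    and eta: "\<eta> C \<noteq> 1"
  shows "\<not> sim_p p z z'"
proof
  assume sim: "sim_p p z z'"
  have u: "\<And>x. u x > 0" using nl unfolding nl_rep_def by auto
  define v \<mu> W T V where "v = u z'" and "\<mu> = u m" and "W = u z powr \<eta> D"
    and "T = (v + \<mu>) powr \<eta> C" and "V = v powr \<eta> C"
  have pos: "v > 0" "\<mu> > 0" "W > 0" "T > 0" "V > 0"
    using u[of z'] u[of m] u[of z] unfolding v_def \<mu>_def W_def T_def V_def by auto
  have triple: "p z' {z', m, z} = T / (T + W) * (v / (v + \<mu>))" "p z {z', m, z} = W / (W + T)"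
    using nl_rep_triple[OF nl CD(1,2) CD(3)[symmetric] CD(5,6) CD(7)[symmetric] CD(4)]
    unfolding v_def \<mu>_def W_def T_def by simp_all
  have pair: "p z {z, z'} = W / (W + V)" "p z' {z, z'} = V / (V + W)"
    using nl_rep_pair_distinct_nests[OF nl CD(2,1,3,4,5)]
      nl_rep_pair_distinct_nests[OF nl CD(1,2) CD(3)[symmetric] CD(5,4)]
    unfolding v_def W_def V_def by (simp_all add: insert_commute)
  have menu: "menu {z', m, z}" by (simp add: menu_def)
  have "W * (v + \<mu>) / (T * v) = p z {z', m, z} / p z' {z', m, z}"
    unfolding triple using pos by (simp add: divide_simps)
  also have "\<dots> = p z {z, z'} / p z' {z, z'}"
    using sim menu unfolding sim_p_def by blast
  also have "\<dots> = W / V"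
    unfolding pair using pos by (simp add: divide_simps)
  finally have "(v + \<mu>) * (v * v powr (\<eta> C - 1)) = v * ((v + \<mu>) * (v + \<mu>) powr (\<eta> C - 1))"
    using pos unfolding T_def V_def by (simp add: powr_diff divide_simps)
  then have "ln (v powr (\<eta> C - 1)) = ln ((v + \<mu>) powr (\<eta> C - 1))"
    using pos by simp
  then have "ln v = ln (v + \<mu>)" using pos eta by (simp add: ln_powr)
  then show False using pos by simp
qed

lemma exists_scale_beyond:
  fixes a b e K :: real
  assumes "a > 0" "b > 0" "e > 0"
  shows "\<exists>R>0. K < R * a \<and> K < (R * b) powr e"
proof -
  define K' where "K' = max K 1"
  define R where "R = max (K' / a) (K' powr (1 / e) / b) + 1"
  have "R > K' / a" "R > K' powr (1 / e) / b" unfolding R_def by linarith+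
  then have "K' < R * a" "K' powr (1 / e) < R * b" using assms by (simp_all add: field_simps)
  moreover have "K' = (K' powr (1 / e)) powr e" using assms unfolding K'_def by (simp add: powr_powr)
  ultimately have "K' < R * a" "K' < (R * b) powr e"
    using assms powr_less_mono2[of e "K' powr (1 / e)" "R * b"] by auto
  moreover have "R > 0" using assms unfolding R_def K'_def by (smt (verit) divide_pos_pos powr_gt_zero)
  ultimately show ?thesis unfolding K'_def by (intro exI[of _ R]) auto
qed

lemma richness_partner:
  assumes sc: "stoch_choice p" and rich: "richness p" and R: "R > 0"
  obtains z' where "sim_p p z z'" "z' \<noteq> z" "p z {z, z'} = 1 / (1 + R)"
proof -
  have "0 < 1 / (1 + R)" "1 / (1 + R) < 1" using R by (simp_all add: field_simps)
  then obtain z' where z': "sim_p p z z'" "p z {z, z'} = 1 / (1 + R)"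
    using rich unfolding richness_def by blast
  moreover have "z' \<noteq> z"
  proof
    assume "z' = z"
    then have "p z {z, z'} = 1" using sc unfolding stoch_choice_def menu_def by auto
    then show False using z' R by (simp add: field_simps)
  qed
  ultimately show ?thesis using that by blast
qed

lemma richness_unbounded_outside_weight:
  assumes nl: "nl_rep p P u \<eta>" and sc: "stoch_choice p" and rich: "richness p"
    and C: "C \<in> P" "x \<in> C" "y \<in> C" "x \<noteq> y" "\<eta> C \<noteq> 1" and D: "D \<in> P" "D \<noteq> C"
  shows "\<exists>E\<in>P. E \<noteq> C \<and> (\<exists>z\<in>E. K < u z powr \<eta> E)"
proof -
  have part: "partition_on UNIV P" and u: "\<And>x. u x > 0" and eta: "\<eta> D > 0"
    using nl D unfolding nl_rep_def by auto
  obtain z where z: "z \<in> D" using partition_onD3[OF part] D by (metis all_not_in_conv)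
  define w where "w = u z powr \<eta> D"
  have w: "w > 0" unfolding w_def using u[of z] by simp
  obtain R where R: "R > 0" "K < R * w" "K < (R * u z) powr \<eta> D"
    using exists_scale_beyond[OF w u[of z] eta] by blast
  obtain z' where z': "sim_p p z z'" "z' \<noteq> z" "p z {z, z'} = 1 / (1 + R)"
    using richness_partner[OF sc rich R(1)] by blast
  obtain E where E: "E \<in> P" "z' \<in> E" using partition_on_UNIV_block_exists[OF part] by blast
  have "E \<noteq> C"
  proof
    assume "E = C"
    obtain m where "m \<in> C" "m \<noteq> z'" using C by blast
    then show False
      using sim_p_partner_outside_nest[OF nl C(1) D(1,2) z, of z' m] E \<open>E = C\<close> C(5) z' by blast
  qed
  moreover have "K < u z' powr \<eta> E"
  proof (cases "E = D")
    case True
    have "u z / (u z + u z') = 1 / (1 + R)"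
      using nl_rep_pair_same_nest[OF nl D(1) z] E True z' by simp
    then have "u z' = R * u z" using u[of z] u[of z'] R by (simp add: field_simps)
    then show ?thesis using R True by simp
  next
    case False
    have "w / (w + u z' powr \<eta> E) = 1 / (1 + R)"
      using nl_rep_pair_distinct_nests[OF nl D(1) E(1) _ z E(2)] False z' unfolding w_def by simp
    then have "u z' powr \<eta> E = R * w" using w R by (simp add: field_simps)
    then show ?thesis using R by simp
  qed
  ultimately show ?thesis using E by blast
qed

lemma regularity_bounds_outside_weight:
  assumes nl: "nl_rep p P u \<eta>" and reg: "regularity p"
    and C: "C \<in> P" "x \<in> C" "y \<in> C" "x \<noteq> y" and E: "E \<in> P" "E \<noteq> C" "z \<in> E"
  shows "u z powr \<eta> E * ((u x + u y) powr (\<eta> C - 1) - u x powr (\<eta> C - 1))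
           \<le> u x powr (\<eta> C - 1) * (u x + u y) powr (\<eta> C - 1) * u y"
proof -
  have u: "\<And>x. u x > 0" using nl unfolding nl_rep_def by auto
  define \<alpha> \<beta> a b w where "\<alpha> = u x" and "\<beta> = u y" and "a = \<alpha> powr (\<eta> C - 1)"
    and "b = (\<alpha> + \<beta>) powr (\<eta> C - 1)" and "w = u z powr \<eta> E"
  have pos: "\<alpha> > 0" "\<beta> > 0" "a > 0" "b > 0" "w > 0"
    using u[of x] u[of y] u[of z] unfolding \<alpha>_def \<beta>_def a_def b_def w_def by auto
  have "u x powr \<eta> C = \<alpha> * a" "(u x + u y) powr \<eta> C = (\<alpha> + \<beta>) * b"
    using pos unfolding \<alpha>_def \<beta>_def a_def b_def by (simp_all add: powr_diff)
  then have "p x {x, y, z} = \<alpha> * b / ((\<alpha> + \<beta>) * b + w)" "p x {x, z} = \<alpha> * a / (\<alpha> * a + w)"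
    using nl_rep_triple(1)[OF nl C(1) E(1) E(2)[symmetric] C(2-4) E(3)]
      nl_rep_pair_distinct_nests[OF nl C(1) E(1) E(2)[symmetric] C(2) E(3)] pos
    unfolding w_def \<alpha>_def \<beta>_def by simp_all
  moreover have "menu {x, z}" by (simp add: menu_def)
  then have "p x (insert y {x, z}) \<le> p x {x, z}"
    using reg unfolding regularity_def by blast
  moreover have "insert y {x, z} = {x, y, z}" by auto
  ultimately have "\<alpha> * b / ((\<alpha> + \<beta>) * b + w) \<le> \<alpha> * a / (\<alpha> * a + w)"
    by simp
  then have "\<alpha> * (b * (\<alpha> * a + w)) \<le> \<alpha> * (a * ((\<alpha> + \<beta>) * b + w))"
    using pos by (simp add: divide_simps mult.assoc mult.left_commute add_pos_pos)
  then have "b * (\<alpha> * a + w) \<le> a * ((\<alpha> + \<beta>) * b + w)"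
    using pos(1) by (rule mult_left_le_imp_le)
  then have "w * (b - a) \<le> a * b * \<beta>"
    by (simp add: algebra_simps)
  then show ?thesis unfolding w_def a_def b_def \<alpha>_def \<beta>_def by (simp add: mult.commute)
qed

lemma large_eta_nest_singleton:
  assumes nl: "nl_rep p P u \<eta>" and sc: "stoch_choice p" and rich: "richness p" and reg: "regularity p"
    and C: "C \<in> P" "\<eta> C > 1" "x \<in> C" "y \<in> C" and D: "D \<in> P" "D \<noteq> C"
  shows "x = y"
proof (rule ccontr)
  assume xy: "x \<noteq> y"
  have u: "\<And>x. u x > 0" using nl unfolding nl_rep_def by auto
  define a b where "a = u x powr (\<eta> C - 1)" and "b = (u x + u y) powr (\<eta> C - 1)"
  have ab: "0 < a" "a < b"
    using u[of x] u[of y] C(2) unfolding a_def b_def by (auto intro: powr_less_mono2)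
  obtain E z where Ez: "E \<in> P" "E \<noteq> C" "z \<in> E" "a * b * u y / (b - a) < u z powr \<eta> E"
    using richness_unbounded_outside_weight[OF nl sc rich C(1,3,4) xy _ D] C(2) by fastforce
  have "u z powr \<eta> E * (b - a) \<le> a * b * u y"
    using regularity_bounds_outside_weight[OF nl reg C(1,3,4) xy Ez(1-3)] unfolding a_def b_def .
  then show False using Ez(4) ab by (simp add: divide_simps)
qed

lemma nl_rep_cong:
  assumes nl: "nl_rep p P u \<eta>" and pos: "\<And>x. u' x > 0" "\<And>D. D \<in> P \<Longrightarrow> \<eta>' D > 0"
    and weight: "\<And>D S. D \<in> P \<Longrightarrow> S \<subseteq> D \<Longrightarrow> finite S \<Longrightarrow> S \<noteq> {} \<Longrightarrow>
        (\<Sum>x\<in>S. u' x) powr \<eta>' D = (\<Sum>x\<in>S. u x) powr \<eta> D"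
    and share: "\<And>D S a. D \<in> P \<Longrightarrow> S \<subseteq> D \<Longrightarrow> finite S \<Longrightarrow> a \<in> S \<Longrightarrow>
        u' a / (\<Sum>x\<in>S. u' x) = u a / (\<Sum>x\<in>S. u x)"
  shows "nl_rep p P u' \<eta>'"
  unfolding nl_rep_def
proof (intro conjI allI impI ballI)
  fix A C a assume h: "menu A \<and> C \<in> P \<and> a \<in> A \<inter> C"
  then have fin: "finite A" unfolding menu_def by blast
  have "(\<Sum>D\<in>{D\<in>P. A \<inter> D \<noteq> {}}. (\<Sum>y\<in>A \<inter> D. u' y) powr \<eta>' D)
      = (\<Sum>D\<in>{D\<in>P. A \<inter> D \<noteq> {}}. (\<Sum>y\<in>A \<inter> D. u y) powr \<eta> D)"
    using fin by (intro sum.cong) (auto intro: weight)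
  moreover have "(\<Sum>y\<in>A \<inter> C. u' y) powr \<eta>' C = (\<Sum>y\<in>A \<inter> C. u y) powr \<eta> C"
    "u' a / (\<Sum>y\<in>A \<inter> C. u' y) = u a / (\<Sum>y\<in>A \<inter> C. u y)"
    using h fin by (auto intro: weight share)
  ultimately show "p a A = ((\<Sum>x\<in>A \<inter> C. u' x) powr \<eta>' C /
                 (\<Sum>D\<in>{D\<in>P. A \<inter> D \<noteq> {}}. (\<Sum>y\<in>A \<inter> D. u' y) powr \<eta>' D))
                * (u' a / (\<Sum>b\<in>A \<inter> C. u' b))"
    using nl_repD[OF nl] h by simp
qed (use nl pos in \<open>auto simp: nl_rep_def\<close>)

lemma nl_rep_flatten_singleton_nests:
  assumes nl: "nl_rep p P u \<eta>" and sing: "\<And>D. D \<in> P \<Longrightarrow> \<eta> D > 1 \<Longrightarrow> \<exists>d. D = {d}"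
  shows "nl_rep p P (\<lambda>x. if {x} \<in> P \<and> \<eta> {x} > 1 then u x powr \<eta> {x} else u x) (\<lambda>D. min (\<eta> D) 1)"
    (is "nl_rep p P ?u ?\<eta>")
proof (rule nl_rep_cong[OF nl])
  have part: "partition_on UNIV P" and u: "\<And>x. u x > 0" and eta: "\<And>D. D \<in> P \<Longrightarrow> \<eta> D > 0"
    using nl unfolding nl_rep_def by auto
  have same: "?u x = u x" if "D \<in> P" "\<not> \<eta> D > 1" "x \<in> D" for D x
    using partition_on_UNIV_block_unique[OF part _ that(1), of "{x}" x] that by auto
  have u': "?u x > 0" for x using u[of x] by simp
  then show "?u x > 0" for x .
  show "?\<eta> D > 0" if "D \<in> P" for D using eta[OF that] by simp
  fix D S assume D: "D \<in> P" and S: "S \<subseteq> D" "finite S"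
  show "(\<Sum>x\<in>S. ?u x) powr ?\<eta> D = (\<Sum>x\<in>S. u x) powr \<eta> D" if "S \<noteq> {}"
  proof (cases "\<eta> D > 1")
    case True
    then obtain d where "D = {d}" using sing D by blast
    then have "S = {d}" using S that by auto
    then show ?thesis using D True \<open>D = {d}\<close> u[of d] by simp
  next
    case False
    have "(\<Sum>x\<in>S. ?u x) = (\<Sum>x\<in>S. u x)" by (intro sum.cong refl same[OF D False]) (use S in blast)
    then show ?thesis using False by simp
  qed
  show "?u a / (\<Sum>x\<in>S. ?u x) = u a / (\<Sum>x\<in>S. u x)" if "a \<in> S" for a
  proof (cases "\<eta> D > 1")
    case True
    then obtain d where "D = {d}" using sing D by blast
    then have Sa: "S = {a}" using S that by auto
    show ?thesis using u[of a] u'[of a] unfolding Sa by simp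
  next
    case False
    have "(\<Sum>x\<in>S. ?u x) = (\<Sum>x\<in>S. u x)" by (intro sum.cong refl same[OF D False]) (use S in blast)
    moreover have "?u a = u a" using S that by (intro same[OF D False]) blast
    ultimately show ?thesis by (simp only:)
  qed
qed

lemma nl_rep_single_nest:
  assumes nl: "nl_rep p {C} u \<eta>" and eta': "\<eta>' C > 0"
  shows "nl_rep p {C} u \<eta>'"
  unfolding nl_rep_def
proof (intro conjI allI impI ballI)
  fix A D a assume h: "menu A \<and> D \<in> {C} \<and> a \<in> A \<inter> D"
  have "C = UNIV" using nl unfolding nl_rep_def partition_on_def by auto
  moreover have "(\<Sum>x\<in>A. u x) > 0"
    using h nl unfolding menu_def nl_rep_def by (intro sum_pos) auto
  moreover have "p a A = u a / (\<Sum>x\<in>A. u x)"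
    using nl_rep_one_nest[OF nl, of A C a] h \<open>C = UNIV\<close> by auto
  moreover have "{D\<in>{C}. A \<inter> D \<noteq> {}} = {C}" using h by auto
  ultimately show "p a A = ((\<Sum>x\<in>A \<inter> D. u x) powr \<eta>' D /
                 (\<Sum>D\<in>{D\<in>{C}. A \<inter> D \<noteq> {}}. (\<Sum>y\<in>A \<inter> D. u y) powr \<eta>' D))
                * (u a / (\<Sum>b\<in>A \<inter> D. u b))"
    using h by auto
qed (use nl eta' in \<open>auto simp: nl_rep_def\<close>)

theorem proposition3:
  fixes p :: "'a \<Rightarrow> 'a set \<Rightarrow> real"
  assumes "stoch_choice p"
    and "nested_logit p"
    and "regularity p"
    and "richness p"
  shows "\<exists>P u \<eta>. nl_rep p P u \<eta> \<and> (\<forall>D\<in>P. \<eta> D \<le> 1)"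
proof -
  obtain P u \<eta> where nl: "nl_rep p P u \<eta>" using assms(2) unfolding nested_logit_def by blast
  show ?thesis
  proof (cases "\<exists>C. P = {C}")
    case True
    then obtain C where "P = {C}" by blast
    then have "nl_rep p P u (\<lambda>_. 1)" using nl_rep_single_nest[of p C u \<eta>] nl by simp
    then show ?thesis by fastforce
  next
    case False
    have "\<exists>d. D = {d}" if D: "D \<in> P" "\<eta> D > 1" for D
    proof -
      obtain D' where "D' \<in> P" "D' \<noteq> D" using False D by blast
      moreover obtain d where "d \<in> D"
        using nl D unfolding nl_rep_def by (metis partition_onD3 ex_in_conv)
      ultimately have "D = {d}"
        using large_eta_nest_singleton[OF nl assms(1,4,3) D] by blast
      then show ?thesis by blast
    qed
    then have "nl_rep p P (\<lambda>x. if {x} \<in> P \<and> \<eta> {x} > 1 then u x powr \<eta> {x} else u x)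
                 (\<lambda>D. min (\<eta> D) 1)"
      by (rule nl_rep_flatten_singleton_nests[OF nl])
    then show ?thesis by fastforce
  qed
qed

end
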